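(* Let $n,k,r$ be integers with $k,r\geq 2$, $k<r$ and $n\geq k+r$, and let $H$ be a vertex-$k$-maximal $r$-uniform hypergraph on $n$ vertices. Let $S$ be a minimum vertex-cut of $H$, $C_1$ a component of $H-S$, $C_2=H-(V(C_1)\cup S)$, $H_1=H[V(C_1)\cup S]$ and $H_2=H[V(C_2)\cup S]$. Then both $H_1$ and $H_2$ are vertex-$k$-maximal $r$-uniform hypergraphs.
   Context: A hypergraph $H=(V,E)$ consists of a finite vertex set $V$ and a set $E$ of non-empty subsets of $V$ (edges); it is $r$-uniform if all edges have exactly $r$ elements. The complement $H^c$ has as edges the $r$-subsets of $V$ not in $E$. A subhypergraph is $H'=(V',E')$ with $V'\subseteq V$, $E'\subseteq E$. $H+e=(V,E\cup\{e\})$ for $e\in E(H^c)$. For $Y\subseteq V$, $H[Y]$ is the induced hypergraph with vertex set $Y$ and edges $\{e\in E: e\subseteq Y\}$, and $H-Y=H[V\setminus Y]$. Connectedness and components are defined via paths (alternating sequences of distinct vertices and distinct edges with consecutive vertices in the intermediate edge). A vertex-cut is a set $X$ with $H-X$ disconnected. $\kappa(H)$ is the minimum size of a vertex-cut if one exists, and $|V(H)|-1$ otherwise. $\overline{\kappa}(H)=\max\{\kappa(H'): H'\subseteq H\}$. An $r$-uniform hypergraph $H$ is vertex-$k$-maximal if $\overline{\kappa}(H)\leq k$ but $\overline{\kappa}(H+e)\geq k+1$ for every $e\in E(H^c)$. *)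

theory Defs
  imports Main
begin

definition hypergraph :: "'a set \<Rightarrow> 'a set set \<Rightarrow> bool" where
  "hypergraph V E \<longleftrightarrow> finite V \<and> (\<forall>e\<in>E. e \<noteq> {} \<and> e \<subseteq> V)"

definition uniform_hg :: "nat \<Rightarrow> 'a set \<Rightarrow> 'a set set \<Rightarrow> bool" where
  "uniform_hg r V E \<longleftrightarrow> hypergraph V E \<and> (\<forall>e\<in>E. card e = r)"

definition induced :: "'a set set \<Rightarrow> 'a set \<Rightarrow> 'a set set" where
  "induced E Y = {e \<in> E. e \<subseteq> Y}"

definition is_path :: "'a set \<Rightarrow> 'a set set \<Rightarrow> 'a list \<Rightarrow> 'a set list \<Rightarrow> bool" where
  "is_path V E vs es \<longleftrightarrow> vs \<noteq> [] \<and> distinct vs \<and> distinct es \<and>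
     length vs = Suc (length es) \<and> set vs \<subseteq> V \<and> set es \<subseteq> E \<and>
     (\<forall>i < length es. vs ! i \<in> es ! i \<and> vs ! Suc i \<in> es ! i)"

definition reachable :: "'a set \<Rightarrow> 'a set set \<Rightarrow> 'a \<Rightarrow> 'a \<Rightarrow> bool" where
  "reachable V E u v \<longleftrightarrow> (\<exists>vs es. is_path V E vs es \<and> hd vs = u \<and> last vs = v)"

definition connected_hg :: "'a set \<Rightarrow> 'a set set \<Rightarrow> bool" where
  "connected_hg V E \<longleftrightarrow> (\<forall>u\<in>V. \<forall>v\<in>V. reachable V E u v)"

text \<open>Vertex set of a component (components are induced by their vertex sets).\<close>
definition component_hg :: "'a set \<Rightarrow> 'a set set \<Rightarrow> 'a set \<Rightarrow> bool" where
  "component_hg V E C \<longleftrightarrow> (\<exists>u\<in>V. C = {v \<in> V. reachable V E u v})"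

definition vertex_cut :: "'a set \<Rightarrow> 'a set set \<Rightarrow> 'a set \<Rightarrow> bool" where
  "vertex_cut V E X \<longleftrightarrow> X \<subseteq> V \<and> \<not> connected_hg (V - X) (induced E (V - X))"

definition kappa :: "'a set \<Rightarrow> 'a set set \<Rightarrow> int" where
  "kappa V E = (if \<exists>X. vertex_cut V E X
                then int (Min {card X | X. vertex_cut V E X})
                else int (card V) - 1)"

definition kappa_bar :: "'a set \<Rightarrow> 'a set set \<Rightarrow> int" where
  "kappa_bar V E = Max {kappa V' E' | V' E'. V' \<subseteq> V \<and> E' \<subseteq> E \<and> hypergraph V' E'}"

definition vertex_k_maximal :: "nat \<Rightarrow> nat \<Rightarrow> 'a set \<Rightarrow> 'a set set \<Rightarrow> bool" where
  "vertex_k_maximal k r V E \<longleftrightarrow> uniform_hg r V E \<and> kappa_bar V E \<le> int k \<and>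
     (\<forall>e. e \<subseteq> V \<and> card e = r \<and> e \<notin> E \<longrightarrow> kappa_bar V (insert e E) \<ge> int k + 1)"

end

theory Submission
  imports Defs
begin

text \<open>
  Let \<open>A = P \<union> S\<close> be either side of the minimum cut \<open>S\<close>, so that
  \<open>|S| = \<kappa>(H) \<le> k < r\<close> and no edge of \<open>H - S\<close> joins \<open>P\<close> to the rest of \<open>V - S\<close>.
  Sub-hypergraphs of \<open>H[A]\<close> are sub-hypergraphs of \<open>H\<close>, so \<open>H[A]\<close> inherits the bound on
  \<open>\<kappa>-bar\<close>. For a non-edge \<open>e \<subseteq> A\<close>, maximality of \<open>H\<close> yields a sub-hypergraph \<open>H'\<close> of
  \<open>H + e\<close> with \<open>\<kappa>(H') > k\<close>; it must contain \<open>e\<close>, and \<open>e\<close> meets \<open>P\<close> since \<open>|e| = r > |S|\<close>.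
  A vertex of \<open>H'\<close> outside \<open>A\<close> would be separated from \<open>e \<inter> P\<close> by \<open>V(H') \<inter> S\<close>, a cut of
  at most \<open>|S| \<le> k\<close> vertices. Hence \<open>H'\<close> lies in \<open>H[A] + e\<close>.
\<close>

lemma hypergraph_finite_edges:
  assumes "hypergraph V E"
  shows "finite E"
proof (rule finite_subset)
  show "E \<subseteq> Pow V" using assms unfolding hypergraph_def by blast
  show "finite (Pow V)" using assms unfolding hypergraph_def by simp
qed

lemma uniform_hg_induced:
  assumes "uniform_hg r V E" "Y \<subseteq> V"
  shows "uniform_hg r Y (induced E Y)"
  using assms finite_subset unfolding uniform_hg_def hypergraph_def induced_def by fastforce

lemma finite_kappa_subgraph_values:
  assumes "finite V" "finite E"
  shows "finite {kappa V' E' | V' E'. V' \<subseteq> V \<and> E' \<subseteq> E \<and> hypergraph V' E'}"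
proof (rule finite_subset)
  show "{kappa V' E' | V' E'. V' \<subseteq> V \<and> E' \<subseteq> E \<and> hypergraph V' E'}
        \<subseteq> (\<lambda>(V', E'). kappa V' E') ` (Pow V \<times> Pow E)" by auto
  show "finite ((\<lambda>(V', E'). kappa V' E') ` (Pow V \<times> Pow E))" using assms by simp
qed

lemma kappa_le_kappa_bar:
  assumes "finite V" "finite E" "V' \<subseteq> V" "E' \<subseteq> E" "hypergraph V' E'"
  shows "kappa V' E' \<le> kappa_bar V E"
  unfolding kappa_bar_def
  by (rule Max_ge[OF finite_kappa_subgraph_values[OF assms(1,2)]]) (use assms(3-5) in blast)

lemma kappa_bar_attained:
  fixes V :: "'a set"
  assumes "finite V" "finite E"
  obtains V' E' where "V' \<subseteq> V" "E' \<subseteq> E" "hypergraph V' E'" "kappa V' E' = kappa_bar V E"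
proof -
  have "kappa ({} :: 'a set) {} \<in> {kappa V' E' | V' E'. V' \<subseteq> V \<and> E' \<subseteq> E \<and> hypergraph V' E'}"
    by (auto simp: hypergraph_def intro!: exI[of _ "{}"])
  then have "kappa_bar V E \<in> {kappa V' E' | V' E'. V' \<subseteq> V \<and> E' \<subseteq> E \<and> hypergraph V' E'}"
    unfolding kappa_bar_def by (intro Max_in[OF finite_kappa_subgraph_values[OF assms]]) blast
  then show ?thesis using that by auto
qed

lemma kappa_bar_mono:
  assumes "finite V" "finite E" "V' \<subseteq> V" "E' \<subseteq> E"
  shows "kappa_bar V' E' \<le> kappa_bar V E"
proof -
  obtain W F where "W \<subseteq> V'" "F \<subseteq> E'" "hypergraph W F" "kappa W F = kappa_bar V' E'"
    using kappa_bar_attained assms finite_subset by metis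
  then show ?thesis using kappa_le_kappa_bar[OF assms(1,2)] assms(3,4) by (metis order_trans)
qed

lemma kappa_bar_insert_attained:
  assumes "finite V" "finite E" "kappa_bar V E < kappa_bar V (insert e E)"
  obtains V' F' where "V' \<subseteq> V" "F' \<subseteq> insert e E" "e \<in> F'" "hypergraph V' F'"
    "kappa V' F' = kappa_bar V (insert e E)"
proof -
  obtain V' F' where V'V: "V' \<subseteq> V" and F'E: "F' \<subseteq> insert e E" and hF: "hypergraph V' F'"
    and kF: "kappa V' F' = kappa_bar V (insert e E)"
    using kappa_bar_attained[of V "insert e E"] assms(1,2) by blast
  have "\<not> F' \<subseteq> E"
  proof
    assume "F' \<subseteq> E"
    then have "kappa V' F' \<le> kappa_bar V E" by (rule kappa_le_kappa_bar[OF assms(1,2) V'V _ hF])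
    then show False using kF assms(3) by simp
  qed
  then have "e \<in> F'" using F'E by blast
  then show ?thesis using that V'V F'E hF kF by blast
qed

lemma finite_cut_cards:
  assumes "finite V"
  shows "finite {card X | X. vertex_cut V E X}"
  using assms by (rule finite_subset[rotated, OF finite_imageI[OF finite_Pow_iff[THEN iffD2]]])
    (auto simp: vertex_cut_def)

lemma kappa_le_card_cut:
  assumes "finite V" "vertex_cut V E X"
  shows "kappa V E \<le> int (card X)"
proof -
  have "Min {card X | X. vertex_cut V E X} \<le> card X"
    using Min_le[OF finite_cut_cards[OF assms(1)]] assms(2) by blast
  then show ?thesis using assms(2) unfolding kappa_def by auto
qed

lemma kappa_eq_card_min_cut:
  assumes "finite V" "vertex_cut V E S" "\<forall>X. vertex_cut V E X \<longrightarrow> card S \<le> card X"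
  shows "kappa V E = int (card S)"
proof -
  have "Min {card X | X. vertex_cut V E X} = card S"
    using assms by (intro Min_eqI[OF finite_cut_cards[OF assms(1)]]) auto
  then show ?thesis using assms(2) unfolding kappa_def by auto
qed

lemma card_min_cut_le_kappa_bar:
  assumes "hypergraph V E" "vertex_cut V E S" "\<forall>X. vertex_cut V E X \<longrightarrow> card S \<le> card X"
  shows "int (card S) \<le> kappa_bar V E"
proof -
  have "finite V" using assms(1) unfolding hypergraph_def by blast
  then have "kappa V E = int (card S)" using kappa_eq_card_min_cut assms(2,3) by blast
  then show ?thesis
    using kappa_le_kappa_bar[OF \<open>finite V\<close> hypergraph_finite_edges[OF assms(1)] _ _ assms(1)]
    by simp
qed

definition edge_closed :: "'a set set \<Rightarrow> 'a set \<Rightarrow> bool" where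
  "edge_closed E P \<longleftrightarrow> (\<forall>f\<in>E. f \<inter> P \<noteq> {} \<longrightarrow> f \<subseteq> P)"

lemma is_path_take:
  assumes "is_path V E vs es" "j < length vs"
  shows "is_path V E (take (Suc j) vs) (take j es)"
  using assms set_take_subset[of "Suc j" vs] set_take_subset[of j es]
  unfolding is_path_def by auto

lemma is_path_snoc:
  assumes "is_path V E vs es" "last vs \<in> f" "y \<in> f" "f \<in> E" "y \<in> V"
    "y \<notin> set vs" "f \<notin> set es"
  shows "is_path V E (vs @ [y]) (es @ [f])"
proof -
  have "last vs = vs ! length es" using assms(1) by (simp add: is_path_def last_conv_nth)
  then show ?thesis using assms unfolding is_path_def by (auto simp: nth_append less_Suc_eq)
qed

lemma is_path_subset_edge_closed:
  assumes "is_path V E vs es" "edge_closed E P" "hd vs \<in> P"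
  shows "set vs \<subseteq> P"
proof -
  have "vs ! i \<in> P" if "i < length vs" for i
    using that
  proof (induction i)
    case 0
    then show ?case using assms(3) by (simp add: hd_conv_nth)
  next
    case (Suc i)
    then have "i < length es" "es ! i \<in> E" "vs ! i \<in> es ! i" "vs ! Suc i \<in> es ! i"
      using assms(1) unfolding is_path_def by auto
    then show ?case using Suc assms(2) unfolding edge_closed_def by auto
  qed
  then show ?thesis by (auto simp: in_set_conv_nth)
qed

lemma reachable_through_edge:
  assumes "reachable V E u x" "x \<in> f" "y \<in> f" "f \<in> E" "y \<in> V"
  shows "reachable V E u y"
proof -
  obtain vs es where p: "is_path V E vs es" "hd vs = u" "last vs = x"
    using assms(1) unfolding reachable_def by blast
  have len: "length vs = Suc (length es)" "vs \<noteq> []" and de: "distinct es"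
    using p(1) unfolding is_path_def by auto
  show ?thesis
  proof (cases "y \<in> set vs")
    case True
    then obtain j where "j < length vs" "vs ! j = y" by (meson in_set_conv_nth)
    then have "is_path V E (take (Suc j) vs) (take j es)" "last (take (Suc j) vs) = y"
      using is_path_take[OF p(1)] by (auto simp: take_Suc_conv_app_nth)
    moreover have "hd (take (Suc j) vs) = u" using p(2) by (simp add: hd_take)
    ultimately show ?thesis unfolding reachable_def by blast
  next
    case False
    \<comment> \<open>cut the path at its first vertex lying on \<open>f\<close>, then step through \<open>f\<close> to \<open>y\<close>\<close>
    obtain i where i: "i \<le> length es" "vs ! i \<in> f" "f \<notin> set (take i es)"
    proof (cases "f \<in> set es")
      case True
      then obtain i where "i < length es" "es ! i = f" by (auto simp: in_set_conv_nth)
      moreover have "f \<notin> set (take i es)"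
        using calculation de by (auto simp: in_set_conv_nth nth_eq_iff_index_eq)
      ultimately show ?thesis using that[of i] p(1) unfolding is_path_def by auto
    next
      case False
      then show ?thesis using that[of "length es"] p(3) len assms(2) by (simp add: last_conv_nth)
    qed
    let ?vs = "take (Suc i) vs" and ?es = "take i es"
    have "is_path V E ?vs ?es" using is_path_take[OF p(1)] i(1) len by simp
    moreover have "last ?vs = vs ! i" using i(1) len by (simp add: take_Suc_conv_app_nth)
    moreover have "y \<notin> set ?vs" using False in_set_takeD by fast
    ultimately have "is_path V E (?vs @ [y]) (?es @ [f])"
      using is_path_snoc assms(3-5) i by metis
    moreover have "hd (?vs @ [y]) = u" using p(2) len by simp
    ultimately show ?thesis unfolding reachable_def by (metis last_snoc)
  qed
qed

lemma component_edge_closed: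
  assumes "component_hg W G C"
  shows "edge_closed (induced G W) C"
  unfolding edge_closed_def
proof (intro ballI impI subsetI)
  fix f y assume f: "f \<in> induced G W" "f \<inter> C \<noteq> {}" and y: "y \<in> f"
  obtain u where u: "C = {v \<in> W. reachable W G u v}"
    using assms unfolding component_hg_def by blast
  obtain x where "x \<in> f" "reachable W G u x" using f(2) u by blast
  moreover have "y \<in> W" "f \<in> G" using f(1) y unfolding induced_def by auto
  ultimately show "y \<in> C" using reachable_through_edge y u by fast
qed

lemma edge_closed_complement:
  assumes "edge_closed (induced E W) P"
  shows "edge_closed (induced E W) (W - P)"
  using assms unfolding edge_closed_def induced_def by blast

lemma not_connected_if_edge_closed:
  assumes "edge_closed E P" "p \<in> V \<inter> P" "q \<in> V - P"
  shows "\<not> connected_hg V E"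
proof
  assume "connected_hg V E"
  then obtain vs es where "is_path V E vs es" "hd vs = p" "last vs = q"
    using assms(2,3) unfolding connected_hg_def reachable_def by blast
  then show False
    using is_path_subset_edge_closed[OF _ assms(1)] assms(2,3)
    by (metis DiffE IntD2 is_path_def last_in_set subsetD)
qed

lemma highly_connected_subgraph_within_side:
  assumes hF: "hypergraph V' F'" and V'V: "V' \<subseteq> V" and F'E: "F' \<subseteq> insert e E"
    and eF: "e \<in> F'" and eA: "e \<subseteq> P \<union> S" and eS: "\<not> e \<subseteq> S"
    and PV: "P \<subseteq> V - S" and clo: "edge_closed (induced E (V - S)) P"
    and fS: "finite S" and kF: "int (card S) < kappa V' F'"
  shows "V' \<subseteq> P \<union> S"
proof (rule ccontr)
  assume "\<not> V' \<subseteq> P \<union> S"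
  then obtain q where q: "q \<in> V'" "q \<notin> P \<union> S" by blast
  obtain p where p: "p \<in> e" "p \<in> P" using eA eS by blast
  define X where "X = V' \<inter> S"
  have "edge_closed (induced F' (V' - X)) P"
    unfolding edge_closed_def
  proof (intro ballI impI)
    fix g assume g: "g \<in> induced F' (V' - X)" "g \<inter> P \<noteq> {}"
    then have gF: "g \<in> F'" and gVS: "g \<subseteq> V - S"
      using V'V unfolding induced_def X_def by auto
    show "g \<subseteq> P"
    proof (cases "g = e")
      case True
      then show ?thesis using eA gVS by blast
    next
      case False
      then have "g \<in> induced E (V - S)" using gF F'E gVS unfolding induced_def by blast
      then show ?thesis using clo g(2) unfolding edge_closed_def by blast
    qed
  qed
  moreover have "p \<in> (V' - X) \<inter> P" "q \<in> (V' - X) - P"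
    using p q PV eF hF unfolding X_def hypergraph_def by auto
  ultimately have "\<not> connected_hg (V' - X) (induced F' (V' - X))"
    by (rule not_connected_if_edge_closed)
  then have "vertex_cut V' F' X" unfolding vertex_cut_def X_def by blast
  then have "kappa V' F' \<le> int (card X)"
    using hF kappa_le_card_cut unfolding hypergraph_def by blast
  moreover have "card X \<le> card S" unfolding X_def using fS by (simp add: card_mono)
  ultimately show False using kF by simp
qed

lemma vertex_k_maximal_side:
  assumes VM: "vertex_k_maximal k r V E" and SV: "S \<subseteq> V" and cS: "card S \<le> k"
    and kr: "k < r" and PV: "P \<subseteq> V - S" and clo: "edge_closed (induced E (V - S)) P"
  shows "vertex_k_maximal k r (P \<union> S) (induced E (P \<union> S))"
proof -
  let ?A = "P \<union> S"
  have uni: "uniform_hg r V E" and kb: "kappa_bar V E \<le> int k"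
    and mx: "\<And>e. e \<subseteq> V \<Longrightarrow> card e = r \<Longrightarrow> e \<notin> E \<Longrightarrow> int k + 1 \<le> kappa_bar V (insert e E)"
    using VM unfolding vertex_k_maximal_def by blast+
  have "hypergraph V E" using uni unfolding uniform_hg_def by blast
  then have fV: "finite V" and fE: "finite E"
    using hypergraph_finite_edges unfolding hypergraph_def by blast+
  have AV: "?A \<subseteq> V" using PV SV by blast
  have fA: "finite ?A" and fS: "finite S" using AV SV fV finite_subset by blast+
  have IE: "induced E ?A \<subseteq> E" unfolding induced_def by blast
  have "int k + 1 \<le> kappa_bar ?A (insert e (induced E ?A))"
    if eA: "e \<subseteq> ?A" and ce: "card e = r" and eI: "e \<notin> induced E ?A" for e
  proof -
    have "e \<notin> E" "e \<subseteq> V" using eA eI AV unfolding induced_def by auto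
    then have kbe: "int k + 1 \<le> kappa_bar V (insert e E)" using mx ce by blast
    then have "kappa_bar V E < kappa_bar V (insert e E)" using kb by simp
    then obtain V' F' where V'V: "V' \<subseteq> V" and F'E: "F' \<subseteq> insert e E" and eF: "e \<in> F'"
      and hF: "hypergraph V' F'" and kF': "kappa V' F' = kappa_bar V (insert e E)"
      by (rule kappa_bar_insert_attained[OF fV fE])
    have kF: "int k + 1 \<le> kappa V' F'" using kbe kF' by simp
    have "\<not> e \<subseteq> S"
    proof
      assume "e \<subseteq> S"
      then have "card e \<le> card S" using fS by (rule card_mono[rotated])
      then show False using ce cS kr by simp
    qed
    moreover have "int (card S) < kappa V' F'" using cS kF by simp
    ultimately have V'A: "V' \<subseteq> ?A"
      using highly_connected_subgraph_within_side[OF hF V'V F'E eF eA _ PV clo fS] by blast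
    have "F' \<subseteq> insert e (induced E ?A)"
      using F'E hF V'A unfolding hypergraph_def induced_def by blast
    then have "kappa V' F' \<le> kappa_bar ?A (insert e (induced E ?A))"
      using kappa_le_kappa_bar[OF fA _ V'A _ hF] finite_subset[OF IE fE] by simp
    then show ?thesis using kF by simp
  qed
  moreover have "kappa_bar ?A (induced E ?A) \<le> int k"
    using kappa_bar_mono[OF fV fE AV IE] kb by simp
  ultimately show ?thesis
    unfolding vertex_k_maximal_def using uniform_hg_induced[OF uni AV] by blast
qed

theorem mainTheorem8:
  fixes n k r :: nat and V :: "'a set" and E :: "'a set set" and S C1 :: "'a set"
  assumes "k \<ge> 2" and "r \<ge> 2" and "k < r" and "n \<ge> k + r"
    and "card V = n"
    and "vertex_k_maximal k r V E"
    and "vertex_cut V E S"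
    and "\<forall>X. vertex_cut V E X \<longrightarrow> card S \<le> card X"
    and "component_hg (V - S) (induced E (V - S)) C1"
  shows "vertex_k_maximal k r (C1 \<union> S) (induced E (C1 \<union> S)) \<and>
         vertex_k_maximal k r ((V - (C1 \<union> S)) \<union> S) (induced E ((V - (C1 \<union> S)) \<union> S))"
proof -
  have "hypergraph V E" and "kappa_bar V E \<le> int k"
    using assms(6) unfolding vertex_k_maximal_def uniform_hg_def by blast+
  then have cS: "card S \<le> k" using card_min_cut_le_kappa_bar[OF _ assms(7,8)] by force
  have SV: "S \<subseteq> V" using assms(7) unfolding vertex_cut_def by blast
  have C1: "C1 \<subseteq> V - S" using assms(9) unfolding component_hg_def by blast
  have clo: "edge_closed (induced E (V - S)) C1"
    using component_edge_closed[OF assms(9)] by (simp add: induced_def)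
  have "vertex_k_maximal k r (C1 \<union> S) (induced E (C1 \<union> S))"
    using vertex_k_maximal_side[OF assms(6) SV cS assms(3) C1 clo] .
  moreover have "vertex_k_maximal k r ((V - S - C1) \<union> S) (induced E ((V - S - C1) \<union> S))"
    using vertex_k_maximal_side[OF assms(6) SV cS assms(3) _ edge_closed_complement[OF clo]]
    by blast
  moreover have "(V - (C1 \<union> S)) \<union> S = (V - S - C1) \<union> S" by blast
  ultimately show ?thesis by simp
qed

end
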